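(* Let $Q$ be a query decomposed into $k$ edge-disjoint TC-subqueries $Q^1,\dots,Q^k$ (in a prefix-connected order), and assume that an incoming edge matches each edge of $Q$ with probability $1/d$, where $d$ is the number of distinct edge labels in $Q$. Consider an incoming edge $\sigma$ that matches one or more edges of $Q$. Then the total expected number of join operations for inserting $\sigma$ (in the worst case where every join result is nonempty) is \[ N=\frac{1}{d}\left((|E(Q)|-1)+\frac{k}{2}(k-1)\right). \]
   Context: A query $Q$ has directed labelled edges $E(Q)$ and a strict partial order $\prec$ (timing order) on them. A TC-query (timing-connected query) is one whose edges can be ordered $\epsilon_1,\dots,\epsilon_m$ with every prefix inducing a weakly connected subquery and $\epsilon_j\prec\epsilon_{j+1}$ for all $j$ (its timing sequence). A TC decomposition of $Q$ is a set of pairwise edge-disjoint TC-subqueries $Q^1,\dots,Q^k$ whose union is $Q$, ordered so that each $Q^1\cup\dots\cup Q^i$ is weakly connected. Evaluation model (the joins being counted): for each $Q^i$, matches of each prefix $\{\epsilon_1,\dots,\epsilon_j\}$ of its timing sequence are stored; when an incoming edge matches $\epsilon_1$ of some $Q^i$ no join is performed, and when it matches $\epsilon_j$ with $j>1$ it is joined once with the stored matches of $\{\epsilon_1,\dots,\epsilon_{j-1}\}$. Matches of $Q^1\cup\dots\cup Q^i$ are also stored for each $i$; when new matches of $Q^1$ arise they are joined successively with the matches of $Q^2,\dots,Q^k$ ($k-1$ joins), and when new matches of $Q^i$ with $i>1$ arise they are joined with the stored matches of $Q^1\cup\dots\cup Q^{i-1}$ and then successively with $Q^{i+1},\dots,Q^k$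 ($k-i+1$ joins). Edge labels here combine the edge label and the labels of its endpoints. *)

theory Defs
  imports "HOL-Probability.Probability"
begin

definition wconn :: "('q \<Rightarrow> 'v) \<Rightarrow> ('q \<Rightarrow> 'v) \<Rightarrow> 'q set \<Rightarrow> bool" where
  "wconn src tgt F \<longleftrightarrow>
     (\<forall>e\<in>F. \<forall>f\<in>F. (e, f) \<in>
        {(a, b). a \<in> F \<and> b \<in> F \<and> {src a, tgt a} \<inter> {src b, tgt b} \<noteq> {}}\<^sup>*)"

text \<open>A TC-subquery is given by (the edge set of) such a sequence.\<close>

definition is_timing_seq ::
  "('q \<Rightarrow> 'v) \<Rightarrow> ('q \<Rightarrow> 'v) \<Rightarrow> ('q \<Rightarrow> 'q \<Rightarrow> bool) \<Rightarrow> 'q list \<Rightarrow> bool" where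
  "is_timing_seq src tgt prec es \<longleftrightarrow>
     es \<noteq> [] \<and> distinct es \<and>
     (\<forall>j\<in>{1..length es}. wconn src tgt (set (take j es))) \<and>
     (\<forall>j. Suc j < length es \<longrightarrow> prec (es ! j) (es ! Suc j))"

definition is_TC_decomp ::
  "('q \<Rightarrow> 'v) \<Rightarrow> ('q \<Rightarrow> 'v) \<Rightarrow> ('q \<Rightarrow> 'q \<Rightarrow> bool) \<Rightarrow> 'q set \<Rightarrow> 'q list list \<Rightarrow> bool" where
  "is_TC_decomp src tgt prec E seqs \<longleftrightarrow>
     seqs \<noteq> [] \<and>
     (\<forall>s\<in>set seqs. is_timing_seq src tgt prec s) \<and>
     (\<forall>i<length seqs. \<forall>i'<length seqs. i \<noteq> i' \<longrightarrow> set (seqs ! i) \<inter> set (seqs ! i') = {}) \<and>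
     (\<Union>s\<in>set seqs. set s) = E \<and>
     (\<forall>i\<in>{1..length seqs}. wconn src tgt (\<Union>s\<in>set (take i seqs). set s))"

text \<open>Number of joins performed (worst case: every join result nonempty) when the
incoming edge matches the edge at 0-based position j of the timing sequence of the
0-based subquery i (i.e. edge epsilon_(j+1) of Q^(i+1)), with k = length seqs:
one join with the stored prefix matches if j > 0; and if this edge is the last
one of the timing sequence, new matches of Q^(i+1) arise, which cost k-1 joins
for the first subquery and k-(i+1)+1 = k-i joins otherwise.\<close>

definition join_cost :: "'q list list \<Rightarrow> nat \<Rightarrow> nat \<Rightarrow> nat" where
  "join_cost seqs i j =
     (if 0 < j then 1 else 0) +
     (if Suc j = length (seqs ! i)
      then (if i = 0 then length seqs - 1 else length seqs - i) else 0)"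

definition join_count :: "('e \<Rightarrow> 'q \<Rightarrow> bool) \<Rightarrow> 'q list list \<Rightarrow> 'e \<Rightarrow> nat" where
  "join_count matches seqs \<sigma> =
     (\<Sum>i<length seqs. \<Sum>j<length (seqs ! i).
        if matches \<sigma> (seqs ! i ! j) then join_cost seqs i j else 0)"

end

theory Submission imports Defs begin

text \<open>By linearity of expectation, the expected number of joins is the total join cost
\<open>\<Sum>\<^sub>i \<Sum>\<^sub>j join_cost seqs i j\<close> over all query edges, scaled by the common match probability
\<open>1/d\<close>. Within the \<open>i\<close>-th subquery every edge but the first costs one join, which gives
\<open>|E(Q)| - k\<close> joins altogether; completing \<open>Q\<^sup>i\<close> costs \<open>k - 1\<close> joins for \<open>i = 1\<close>
and \<open>k - i + 1\<close> joins otherwise, which sums to \<open>(k - 1) + k(k - 1)/2\<close>.\<close>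

lemma expectation_sum_if_pmf:
  fixes M :: "'e pmf" and c :: "'i \<Rightarrow> real"
  assumes "finite I"
  shows "measure_pmf.expectation M (\<lambda>\<sigma>. \<Sum>x\<in>I. if P \<sigma> x then c x else 0)
           = (\<Sum>x\<in>I. c x * measure_pmf.prob M {\<sigma>. P \<sigma> x})"
proof -
  have if_eq: "(\<lambda>\<sigma>. if P \<sigma> x then c x else 0) = (\<lambda>\<sigma>. c x * indicator {\<sigma>. P \<sigma> x} \<sigma>)" for x
    by (auto simp: indicator_def)
  have "integrable (measure_pmf M) (\<lambda>\<sigma>. c x * indicator {\<sigma>. P \<sigma> x} \<sigma>)" for x
    by (intro integrable_mult_right integrable_real_indicator)
       (simp_all add: measure_pmf.emeasure_eq_measure)
  then show ?thesis
    by (simp add: if_eq Bochner_Integration.integral_sum)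
qed

lemma card_eq_sum_length_if_TC_decomp:
  assumes "is_TC_decomp src tgt prec E seqs"
  shows "card E = (\<Sum>i<length seqs. length (seqs ! i))"
proof -
  have disjoint: "\<forall>i<length seqs. \<forall>i'<length seqs. i \<noteq> i' \<longrightarrow> set (seqs ! i) \<inter> set (seqs ! i') = {}"
    and cover: "(\<Union>s\<in>set seqs. set s) = E"
    and timing: "\<forall>s\<in>set seqs. is_timing_seq src tgt prec s"
    using assms by (auto simp: is_TC_decomp_def)
  have "E = (\<Union>i<length seqs. set (seqs ! i))"
    using cover by (auto simp: set_conv_nth)
  then have "card E = (\<Sum>i<length seqs. card (set (seqs ! i)))"
    using disjoint by (simp add: card_UN_disjoint)
  also have "\<dots> = (\<Sum>i<length seqs. length (seqs ! i))"
    using timing by (intro sum.cong) (auto simp: is_timing_seq_def distinct_card)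
  finally show ?thesis .
qed

lemma sum_join_cost_subquery:
  assumes "seqs ! i \<noteq> []"
  shows "(\<Sum>j<length (seqs ! i). join_cost seqs i j)
           = (length (seqs ! i) - 1) + (if i = 0 then length seqs - 1 else length seqs - i)"
proof -
  obtain m where m: "length (seqs ! i) = Suc m"
    using assms by (cases "length (seqs ! i)") auto
  have "(\<Sum>j<m. join_cost seqs i j) = (\<Sum>j<m. if 0 < j then 1 else 0)"
    using m by (intro sum.cong) (auto simp: join_cost_def)
  also have "\<dots> = card ({..<m} \<inter> {j. 0 < j})"
    by (simp add: sum.If_cases)
  also have "{..<m} \<inter> {j. 0 < j} = {1..<m}"
    by auto
  finally have "(\<Sum>j<m. join_cost seqs i j) = m - 1"
    by simp
  then show ?thesis
    using m by (simp add: join_cost_def)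
qed

lemma double_sum_completion_joins:
  "2 * (\<Sum>i<k. if i = 0 then k - 1 else k - i) = (k - 1) * (k + 2 :: nat)"
proof (cases k)
  case (Suc m)
  have "(\<Sum>i<Suc m. if i = 0 then Suc m - 1 else Suc m - i) = m + (\<Sum>i<m. m - i)"
    by (subst sum.lessThan_Suc_shift) simp
  also have "(\<Sum>i<m. m - i) = (\<Sum>i<m. Suc i)"
    using sum.nat_diff_reindex[where g = Suc and n = m] by (simp add: Suc_diff_Suc)
  finally have "(\<Sum>i<k. if i = 0 then k - 1 else k - i) = m + (\<Sum>i<m. Suc i)"
    unfolding Suc .
  moreover have "2 * (\<Sum>i<m. Suc i) = m * (m + 1)"
    by (induction m) auto
  ultimately show ?thesis
    using Suc by (simp add: algebra_simps)
qed simp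

lemma sum_join_cost_TC_decomp:
  assumes "is_TC_decomp src tgt prec E seqs"
  shows "real (\<Sum>i<length seqs. \<Sum>j<length (seqs ! i). join_cost seqs i j)
           = (real (card E) - 1) + real (length seqs) / 2 * (real (length seqs) - 1)"
proof -
  define k where "k = length seqs"
  have "k \<ge> 1" and nonempty: "\<And>i. i < k \<Longrightarrow> seqs ! i \<noteq> []"
    using assms by (auto simp: is_TC_decomp_def is_timing_seq_def k_def Suc_le_eq)
  have "(\<Sum>i<k. \<Sum>j<length (seqs ! i). join_cost seqs i j)
        = (\<Sum>i<k. length (seqs ! i) - 1) + (\<Sum>i<k. if i = 0 then k - 1 else k - i)"
    using nonempty unfolding k_def by (simp add: sum_join_cost_subquery sum.distrib)
  moreover have "real (\<Sum>i<k. length (seqs ! i) - 1) = real (card E) - real k"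
    using nonempty card_eq_sum_length_if_TC_decomp[OF assms]
    by (simp add: of_nat_sum of_nat_diff sum_subtractf k_def Suc_le_eq)
  moreover have "real (\<Sum>i<k. if i = 0 then k - 1 else k - i) = (real k - 1) * (real k + 2) / 2"
  proof -
    have "real (2 * (\<Sum>i<k. if i = 0 then k - 1 else k - i)) = real ((k - 1) * (k + 2))"
      by (simp only: double_sum_completion_joins)
    then show ?thesis
      using \<open>k \<ge> 1\<close> by (simp only: of_nat_mult of_nat_diff of_nat_add) simp
  qed
  ultimately show ?thesis
    unfolding k_def[symmetric] by (simp add: field_simps)
qed

theorem theorem7:
  fixes E :: "'q set"
    and src tgt :: "'q \<Rightarrow> 'v"
    and lab :: "'q \<Rightarrow> 'l"
    and prec :: "'q \<Rightarrow> 'q \<Rightarrow> bool"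
    and seqs :: "'q list list"
    and M :: "'e pmf"
    and matches :: "'e \<Rightarrow> 'q \<Rightarrow> bool"
    and d k :: nat
  assumes "finite E"
    and "\<forall>x\<in>E. \<not> prec x x"
    and "\<forall>x\<in>E. \<forall>y\<in>E. \<forall>z\<in>E. prec x y \<longrightarrow> prec y z \<longrightarrow> prec x z"
    and "is_TC_decomp src tgt prec E seqs"
    and "k = length seqs"
    and "d = card (lab ` E)"
    and "\<forall>\<epsilon>\<in>E. measure_pmf.prob M {\<sigma>. matches \<sigma> \<epsilon>} = 1 / real d"
  shows "measure_pmf.expectation M (\<lambda>\<sigma>. real (join_count matches seqs \<sigma>))
           = (1 / real d) * ((real (card E) - 1) + real k / 2 * (real k - 1))"
proof -
  define P where "P = Sigma {..<length seqs} (\<lambda>i. {..<length (seqs ! i)})"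
  have edge_in_E: "seqs ! i ! j \<in> E" if "(i, j) \<in> P" for i j
    using that assms(4) unfolding P_def is_TC_decomp_def by (auto simp: set_conv_nth)
  have "(\<lambda>\<sigma>. real (join_count matches seqs \<sigma>))
        = (\<lambda>\<sigma>. \<Sum>x\<in>P. if matches \<sigma> (seqs ! fst x ! snd x)
                            then real (join_cost seqs (fst x) (snd x)) else 0)"
    by (simp add: join_count_def P_def sum.Sigma of_nat_sum split_def)
       (simp only: if_distrib[where f = real] of_nat_0)
  then have "measure_pmf.expectation M (\<lambda>\<sigma>. real (join_count matches seqs \<sigma>))
        = (\<Sum>x\<in>P. real (join_cost seqs (fst x) (snd x))
                    * measure_pmf.prob M {\<sigma>. matches \<sigma> (seqs ! fst x ! snd x)})"
    by (simp add: expectation_sum_if_pmf P_def)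
  also have "\<dots> = (\<Sum>x\<in>P. real (join_cost seqs (fst x) (snd x)) * (1 / real d))"
    using assms(7) edge_in_E by (intro sum.cong) auto
  also have "\<dots> = (1 / real d) * real (\<Sum>i<length seqs. \<Sum>j<length (seqs ! i). join_cost seqs i j)"
    by (simp add: P_def sum.Sigma split_def of_nat_sum sum_distrib_left mult.commute)
  finally show ?thesis
    using sum_join_cost_TC_decomp[OF assms(4)] assms(5) by simp
qed

end
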